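(* In the epoch setting described in the context, assume moreover that $\mathcal{G}$ is $\Delta$-temporally connected. If $(s_1,\dots,s_\rho)\in S^{(1)}\times\cdots\times S^{(\rho)}$ is a tuple that is $I$-covering for every $I\in\mathcal{I}$, then $\mathcal{G}$ can be explored from any vertex during the $\rho$ epochs, i.e., for every vertex $v$ there is a temporal walk starting at $v$, using only time steps within the $\rho$ epochs, that visits all vertices.
   Context: A temporal walk in $\mathcal{G}=\langle G_1,\dots,G_L\rangle$ is a sequence $(v_0,e_1,v_1,\dots,e_\ell,v_\ell)$ with strictly increasing time steps $t_1<\dots<t_\ell$ such that $e_j=\{v_{j-1},v_j\}\in E(G_{t_j})$. $\mathcal{G}$ is temporally connected if every ordered pair of vertices is joined by a temporal walk, and $\Delta$-temporally connected if $\langle G_t,\dots,G_{t+\Delta-1}\rangle$ is temporally connected for every $t\in[L-\Delta+1]$. Let $n\ge 2$ and $k\ge1$, $\Delta$ be natural numbers, $\mathcal{G}$ a temporal graph on an $n$-element vertex set $V$, and $T$ a spanning tree of its underlying graph (the union of the snapshots). A snapshot is $k$-edge-deficient w.r.t. $T$ if it contains all but at most $k$ edges of $T$. Let $N=2(n-1)$, fix a DFS tour of $T$ from a root $r$ traversing each edge twice, with cyclic vertex sequence $(v_1,\dots,v_{N+1})$, $v_{N+1}=v_1=r$, tour edges $e_q=\{v_q,v_{q+1}\}$; state $q$ corresponds to vertex $v_q$. Circular intervals: $[\![i,j]\!]=\{i,\dots,j\}$ if $i\le j$, $\{i,\dots,N,1,\dots,j\}$ if $i>j$; $[\![i,j[\![=[\![i,j]\!]\setminus\{j\}$.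 Roundabout process on a sequence $H_1,\dots,H_t$ of graphs: agents $a_1,\dots,a_N$, $s_i(0)=i$; at step $\tau$, if $s_i(\tau-1)=q$ then $s_i(\tau)=(q\bmod N)+1$ if $e_q\in E(H_\tau)$, else $q$; visited states $D_i(\tau)=[\![i,s_i(\tau)]\!]$, $D_i(0)=\{i\}$; active sets $A(0)=$ all agents, and $A(\tau)$ is obtained from $A(\tau-1)$ by repeatedly removing an arbitrary agent $a_i$ with $D_i(\tau)\subseteq\bigcup D_j(\tau)$ over the other current agents, until none remains. Let $t=\lfloor N/(2k)\rfloor$ and $\rho=\lceil 18k\ln(6k)\rceil$. Assume an initial part of $[L]$ is partitioned into $\rho$ consecutive intervals (epochs), each containing at least $\Delta+t$ snapshots that are $k$-edge-deficient w.r.t. $T$; each epoch's first $\Delta$ time steps form its repositioning part, and the rest (containing at least $t$ such snapshots) is its roundabout part. In epoch $i$, run the roundabout process for $t$ steps on the first $t$ $k$-edge-deficient snapshots of its roundabout part, let $A^{(i)}$ be the active agents after step $t$ and $S^{(i)}$ their initial states. Let $\bigcup_{i\in[\rho]}S^{(i)}=\{m_1<\dots<m_d\}$, $I_j=[\![m_j,m_{j+1}[\![$ for $j\in[d-1]$, $I_d=[\![m_d,m_1[\![$, and $\mathcal{I}=\{I_1,\dots,I_d\}$. For $I\in\mathcal{I}$, a tuple $(s_1,\dots,s_\rho)\in S^{(1)}\times\cdots\times S^{(\rho)}$ is $I$-covering unless for every $i\in[\rho]$ the agent of $A^{(i)}$ with initial state $s_i$ fails to visit all states of $I$ in the roundabout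 process of epoch $i$. *)

theory Defs
  imports Complex_Main
begin

text \<open>A temporal graph is given by its snapshot edge sets E t (t = 1..L), each edge a
  2-element subset of the vertex set V.\<close>

definition temporal_walk :: "(nat \<Rightarrow> 'a set set) \<Rightarrow> 'a list \<Rightarrow> nat list \<Rightarrow> bool" where
  "temporal_walk E vs ts \<longleftrightarrow>
     length vs = Suc (length ts) \<and> sorted_wrt (<) ts \<and>
     (\<forall>j < length ts. {vs ! j, vs ! Suc j} \<in> E (ts ! j))"

definition temporally_connected_on :: "'a set \<Rightarrow> (nat \<Rightarrow> 'a set set) \<Rightarrow> nat set \<Rightarrow> bool" where
  "temporally_connected_on V E W \<longleftrightarrow>
     (\<forall>u\<in>V. \<forall>x\<in>V. \<exists>vs ts. temporal_walk E vs ts \<and> hd vs = u \<and> last vs = x \<and> set ts \<subseteq> W)"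

definition delta_temporally_connected :: "'a set \<Rightarrow> (nat \<Rightarrow> 'a set set) \<Rightarrow> nat \<Rightarrow> nat \<Rightarrow> bool" where
  "delta_temporally_connected V E L \<Delta> \<longleftrightarrow>
     (\<forall>t. 1 \<le> t \<and> t + \<Delta> \<le> L + 1 \<longrightarrow> temporally_connected_on V E {t..<t + \<Delta>})"

definition underlying_edges :: "(nat \<Rightarrow> 'a set set) \<Rightarrow> nat \<Rightarrow> 'a set set" where
  "underlying_edges E L = (\<Union>t\<in>{1..L}. E t)"

definition spanning_tree :: "'a set \<Rightarrow> (nat \<Rightarrow> 'a set set) \<Rightarrow> nat \<Rightarrow> 'a set set \<Rightarrow> bool" where
  "spanning_tree V E L T \<longleftrightarrow>
     T \<subseteq> underlying_edges E L \<and> finite T \<and> card T = card V - 1 \<and>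
     (\<forall>x\<in>V. \<forall>y\<in>V. (\<lambda>a b. {a, b} \<in> T)\<^sup>*\<^sup>* x y)"

text \<open>Closed tour (w 1, ..., w (N+1)) of T from the root r, N = 2(n-1), traversing each tree
  edge exactly twice (in a tree such a closed walk is exactly a DFS tour).\<close>
definition dfs_tour :: "'a set set \<Rightarrow> 'a \<Rightarrow> nat \<Rightarrow> (nat \<Rightarrow> 'a) \<Rightarrow> bool" where
  "dfs_tour T r N w \<longleftrightarrow>
     w 1 = r \<and> w (N + 1) = r \<and>
     (\<forall>q\<in>{1..N}. {w q, w (Suc q)} \<in> T) \<and>
     (\<forall>e\<in>T. card {q\<in>{1..N}. {w q, w (Suc q)} = e} = 2)"

definition edge_deficient :: "'a set set \<Rightarrow> nat \<Rightarrow> 'a set set \<Rightarrow> bool" where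
  "edge_deficient T k G \<longleftrightarrow> card (T - G) \<le> k"

definition circ :: "nat \<Rightarrow> nat \<Rightarrow> nat \<Rightarrow> nat set" where
  "circ N i j = (if i \<le> j then {i..j} else {i..N} \<union> {1..j})"

definition circ_open :: "nat \<Rightarrow> nat \<Rightarrow> nat \<Rightarrow> nat set" where
  "circ_open N i j = circ N i j - {j}"

text \<open>State of agent a_i after tau steps on graphs H 1, H 2, ...; tour edge e_q = {w q, w (q+1)}.\<close>
fun rstate :: "(nat \<Rightarrow> 'a) \<Rightarrow> nat \<Rightarrow> (nat \<Rightarrow> 'a set set) \<Rightarrow> nat \<Rightarrow> nat \<Rightarrow> nat" where
  "rstate w N H i 0 = i"
| "rstate w N H i (Suc \<tau>) =
     (let q = rstate w N H i \<tau> in if {w q, w (Suc q)} \<in> H (Suc \<tau>) then q mod N + 1 else q)"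

definition visited :: "(nat \<Rightarrow> 'a) \<Rightarrow> nat \<Rightarrow> (nat \<Rightarrow> 'a set set) \<Rightarrow> nat \<Rightarrow> nat \<Rightarrow> nat set" where
  "visited w N H i \<tau> = circ N i (rstate w N H i \<tau>)"

definition removable :: "(nat \<Rightarrow> nat set) \<Rightarrow> nat set \<Rightarrow> nat \<Rightarrow> bool" where
  "removable D X i \<longleftrightarrow> i \<in> X \<and> D i \<subseteq> (\<Union>j\<in>X - {i}. D j)"

definition remove_step :: "(nat \<Rightarrow> nat set) \<Rightarrow> nat set \<Rightarrow> nat set \<Rightarrow> bool" where
  "remove_step D X Y \<longleftrightarrow> (\<exists>i. removable D X i \<and> Y = X - {i})"

text \<open>Y is a possible outcome of repeatedly removing arbitrary removable agents from X until
  none remains (the choices are arbitrary, so this is a relation).\<close>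
definition reduces :: "(nat \<Rightarrow> nat set) \<Rightarrow> nat set \<Rightarrow> nat set \<Rightarrow> bool" where
  "reduces D X Y \<longleftrightarrow> (remove_step D)\<^sup>*\<^sup>* X Y \<and> \<not> (\<exists>i. removable D Y i)"

text \<open>A is a possible sequence of active sets (agents identified with their indices,
  i.e. with their initial states) for the first t steps of the process.\<close>
definition active_run :: "(nat \<Rightarrow> 'a) \<Rightarrow> nat \<Rightarrow> (nat \<Rightarrow> 'a set set) \<Rightarrow> nat \<Rightarrow> (nat \<Rightarrow> nat set) \<Rightarrow> bool" where
  "active_run w N H t A \<longleftrightarrow>
     A 0 = {1..N} \<and> (\<forall>\<tau><t. reduces (\<lambda>i. visited w N H i (Suc \<tau>)) (A \<tau>) (A (Suc \<tau>)))"

definition rho :: "nat \<Rightarrow> nat" where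
  "rho k = nat \<lceil>18 * real k * ln (6 * real k)\<rceil>"

definition tsteps :: "nat \<Rightarrow> nat \<Rightarrow> nat" where
  "tsteps N k = N div (2 * k)"

definition epoch :: "(nat \<Rightarrow> nat) \<Rightarrow> nat \<Rightarrow> nat set" where
  "epoch b i = {b (i - 1)..<b i}"

definition roundabout_part :: "(nat \<Rightarrow> nat) \<Rightarrow> nat \<Rightarrow> nat \<Rightarrow> nat set" where
  "roundabout_part b \<Delta> i = {b (i - 1) + \<Delta>..<b i}"

text \<open>The graph sequence of epoch i: H tau is the tau-th (tau >= 1) k-edge-deficient snapshot
  of the roundabout part of epoch i.\<close>
definition epoch_graphs ::
  "(nat \<Rightarrow> 'a set set) \<Rightarrow> 'a set set \<Rightarrow> nat \<Rightarrow> (nat \<Rightarrow> nat) \<Rightarrow> nat \<Rightarrow> nat \<Rightarrow> nat \<Rightarrow> 'a set set" where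
  "epoch_graphs E T k b \<Delta> i \<tau> =
     E (sorted_list_of_set {x \<in> roundabout_part b \<Delta> i. edge_deficient T k (E x)} ! (\<tau> - 1))"

definition state_intervals :: "nat \<Rightarrow> nat set \<Rightarrow> nat set set" where
  "state_intervals N M =
     (let ms = sorted_list_of_set M in
      if ms = [] then {} else
        {circ_open N (ms ! j) (ms ! Suc j) | j. Suc j < length ms}
        \<union> {circ_open N (last ms) (hd ms)})"

end

theory Submission
  imports Defs
begin

(* Every state of the tour is visited by the chosen agent s_i of some epoch i: if the set M of
   initial states of surviving agents has at least two elements, its circular intervals cover all
   states and each of them is covered by assumption; if M = {m}, then m is the only surviving agent
   of every epoch, and the surviving agents always jointly cover all states. Since the tour visits
   every vertex, it remains to walk along the chosen agents: in epoch i, Delta-temporal connectivity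
   leads from the current vertex to w (s_i) during the repositioning part, and the agent itself
   traces a temporal walk in the roundabout part, as it only moves along tour edges present in the
   current snapshot. *)

lemma temporal_walk_singleton: "temporal_walk E [u] []"
  by (simp add: temporal_walk_def)

lemma temporal_walk_nonempty: "temporal_walk E vs ts \<Longrightarrow> vs \<noteq> []"
  by (auto simp: temporal_walk_def)

lemma temporal_walk_Cons_Cons:
  "temporal_walk E (v # vs) (t # ts) \<longleftrightarrow>
     vs \<noteq> [] \<and> {v, hd vs} \<in> E t \<and> (\<forall>x\<in>set ts. t < x) \<and> temporal_walk E vs ts"
proof -
  have split_first: "(\<forall>j<Suc m. P j) \<longleftrightarrow> P 0 \<and> (\<forall>j<m. P (Suc j))" for m and P :: "nat \<Rightarrow> bool"
    using All_less_Suc2 by blast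
  show ?thesis
    unfolding temporal_walk_def by (cases vs) (auto simp: split_first)
qed

lemma temporal_walk_append:
  assumes "temporal_walk E vs ts" "temporal_walk E vs' ts'" "last vs = hd vs'"
    and "\<forall>a\<in>set ts. \<forall>c\<in>set ts'. a < c"
  shows "temporal_walk E (vs @ tl vs') (ts @ ts')"
  using assms
proof (induction ts arbitrary: vs)
  case Nil
  then obtain v where "vs = [v]"
    by (cases vs) (auto simp: temporal_walk_def)
  moreover have "vs' \<noteq> []"
    using temporal_walk_nonempty[OF Nil.prems(2)] .
  ultimately show ?case
    using Nil.prems(2,3) by simp
next
  case (Cons t ts)
  obtain v vs0 where vs: "vs = v # vs0"
    using temporal_walk_nonempty[OF Cons.prems(1)] by (cases vs) auto
  have tail: "vs0 \<noteq> []" "{v, hd vs0} \<in> E t" "\<forall>x\<in>set ts. t < x" "temporal_walk E vs0 ts"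
    using Cons.prems(1) unfolding vs temporal_walk_Cons_Cons by simp_all
  have "temporal_walk E (vs0 @ tl vs') (ts @ ts')"
  proof (rule Cons.IH[OF tail(4) Cons.prems(2)])
    show "last vs0 = hd vs'" using Cons.prems(3) vs tail(1) by simp
    show "\<forall>a\<in>set ts. \<forall>c\<in>set ts'. a < c" using Cons.prems(4) by simp
  qed
  moreover have "\<forall>x\<in>set (ts @ ts'). t < x"
    using tail(3) Cons.prems(4) by auto
  ultimately show ?case
    using vs tail(1,2) by (simp add: temporal_walk_Cons_Cons)
qed

definition covering_walk :: "(nat \<Rightarrow> 'a set set) \<Rightarrow> nat set \<Rightarrow> 'a \<Rightarrow> 'a \<Rightarrow> 'a set \<Rightarrow> bool" where
  "covering_walk E W u x X \<longleftrightarrow>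
     (\<exists>vs ts. temporal_walk E vs ts \<and> hd vs = u \<and> last vs = x \<and> set ts \<subseteq> W \<and> X \<subseteq> set vs)"

lemma covering_walk_refl: "covering_walk E W u u {u}"
  unfolding covering_walk_def using temporal_walk_singleton by fastforce

lemma covering_walk_edge: "{x, y} \<in> E t \<Longrightarrow> covering_walk E {t} x y {x, y}"
  unfolding covering_walk_def
  by (rule exI[of _ "[x, y]"], rule exI[of _ "[t]"]) (simp add: temporal_walk_def)

lemma covering_walk_mono:
  "covering_walk E W u x X \<Longrightarrow> W \<subseteq> W' \<Longrightarrow> X' \<subseteq> X \<Longrightarrow> covering_walk E W' u x X'"
  unfolding covering_walk_def by blast

lemma covering_walk_trans:
  assumes "covering_walk E W u x X" "covering_walk E W' x y Y" "\<forall>a\<in>W. \<forall>c\<in>W'. a < c"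
  shows "covering_walk E (W \<union> W') u y (X \<union> Y)"
proof -
  obtain vs ts vs' ts' where
    walk: "temporal_walk E vs ts" "hd vs = u" "last vs = x" "set ts \<subseteq> W" "X \<subseteq> set vs" and
    walk': "temporal_walk E vs' ts'" "hd vs' = x" "last vs' = y" "set ts' \<subseteq> W'" "Y \<subseteq> set vs'"
    using assms(1,2) unfolding covering_walk_def by blast
  have ne: "vs \<noteq> []" "vs' \<noteq> []"
    using walk(1) walk'(1) temporal_walk_nonempty by blast+
  have "temporal_walk E (vs @ tl vs') (ts @ ts')"
    using temporal_walk_append[OF walk(1) walk'(1)] walk(3,4) walk'(2,4) assms(3) by auto
  moreover have "last (vs @ tl vs') = y"
    using ne walk(3) walk'(2,3) by (cases vs') auto
  moreover have "set vs' \<subseteq> set (vs @ tl vs')"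
    using ne walk(3) walk'(2) by (cases vs') auto
  ultimately show ?thesis
    unfolding covering_walk_def using ne walk walk'
    by (intro exI[of _ "vs @ tl vs'"] exI[of _ "ts @ ts'"]) auto
qed

lemma temporally_connected_on_iff_covering_walk:
  "temporally_connected_on V E W \<longleftrightarrow> (\<forall>u\<in>V. \<forall>x\<in>V. covering_walk E W u x {})"
  by (simp add: temporally_connected_on_def covering_walk_def)

lemma covering_walk_through_epochs:
  assumes b_mono: "\<And>i. i < R \<Longrightarrow> b i \<le> b (Suc i)"
    and epoch_walk: "\<And>i x. i \<in> {1..R} \<Longrightarrow> x \<in> V \<Longrightarrow> \<exists>y\<in>V. covering_walk E (epoch b i) x y (X i)"
    and "u \<in> V"
  shows "\<exists>y\<in>V. covering_walk E {b 0..<b R} u y (\<Union>i\<in>{1..R}. X i)"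
  using assms
proof (induction R)
  case 0
  have "covering_walk E {b 0..<b 0} u u {}"
    by (rule covering_walk_mono[OF covering_walk_refl order_refl]) simp
  then show ?case
    using \<open>u \<in> V\<close> by (intro bexI[of _ u]) simp_all
next
  case (Suc R)
  have "\<exists>x\<in>V. covering_walk E {b 0..<b R} u x (\<Union>i\<in>{1..R}. X i)"
  proof (rule Suc.IH)
    show "b i \<le> b (Suc i)" if "i < R" for i
      using Suc.prems(1) that by simp
    show "\<exists>y\<in>V. covering_walk E (epoch b i) x y (X i)" if "i \<in> {1..R}" "x \<in> V" for i x
      using Suc.prems(2) that by simp
  qed fact
  then obtain x where x: "x \<in> V" "covering_walk E {b 0..<b R} u x (\<Union>i\<in>{1..R}. X i)" ..
  obtain y where y: "y \<in> V" "covering_walk E (epoch b (Suc R)) x y (X (Suc R))"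
    using Suc.prems(2)[of "Suc R" x] x(1) by auto
  have "b 0 \<le> b R"
    by (rule lift_Suc_mono_le_ivl[of "{..<Suc R}"]) (use Suc.prems(1) in auto)
  then have "{b 0..<b R} \<union> epoch b (Suc R) \<subseteq> {b 0..<b (Suc R)}"
    using Suc.prems(1)[of R] by (auto simp: epoch_def)
  moreover have "covering_walk E ({b 0..<b R} \<union> epoch b (Suc R)) u y ((\<Union>i\<in>{1..R}. X i) \<union> X (Suc R))"
    by (rule covering_walk_trans[OF x(2) y(2)]) (auto simp: epoch_def)
  moreover have "(\<Union>i\<in>{1..R}. X i) \<union> X (Suc R) = (\<Union>i\<in>{1..Suc R}. X i)"
    by (simp add: atLeastAtMostSuc_conv Un_commute)
  ultimately have "covering_walk E {b 0..<b (Suc R)} u y (\<Union>i\<in>{1..Suc R}. X i)"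
    using covering_walk_mono by (metis order_refl)
  then show ?case
    using y(1) by blast
qed

lemma circ_same: "circ N i i = {i}"
  by (simp add: circ_def)

lemma circ_subset_states: "i \<in> {1..N} \<Longrightarrow> q \<in> {1..N} \<Longrightarrow> circ N i q \<subseteq> {1..N}"
  by (auto simp: circ_def)

lemma circ_extend:
  assumes "i \<in> {1..N}" "q \<in> {1..N}" "q mod N + 1 \<noteq> i"
  shows "circ N i (q mod N + 1) = insert (q mod N + 1) (circ N i q)"
proof (cases "q < N")
  case True
  then show ?thesis using assms by (auto simp: circ_def)
next
  case False
  then have "q = N" using assms by auto
  then show ?thesis using assms by (auto simp: circ_def)
qed

lemma circ_wrap_around:
  assumes "q \<in> {1..N}" "q mod N + 1 = i"
  shows "circ N i q = {1..N}"
proof (cases "q < N")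
  case True
  then show ?thesis using assms by (auto simp: circ_def)
next
  case False
  then have "q = N" using assms by auto
  then show ?thesis using assms by (auto simp: circ_def)
qed

lemma closed_tour_mod_Suc:
  assumes "w (Suc N) = w 1" "q \<in> {1..N}"
  shows "w (q mod N + 1) = w (Suc q)"
proof (cases "q < N")
  case False
  then have "q = N" using assms(2) by simp
  then show ?thesis using assms(1) by simp
qed simp

lemma rstate_in_states: "i \<in> {1..N} \<Longrightarrow> rstate w N H i \<tau> \<in> {1..N}"
proof (induction \<tau>)
  case (Suc \<tau>)
  then have "rstate w N H i \<tau> mod N < N" by simp
  then show ?case using Suc by (simp add: Let_def Suc_leI)
qed simp

lemma visited_subset_states: "i \<in> {1..N} \<Longrightarrow> visited w N H i \<tau> \<subseteq> {1..N}"
  unfolding visited_def using circ_subset_states rstate_in_states by blast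

lemma visited_Suc_if_incomplete:
  assumes i: "i \<in> {1..N}" and incomplete: "visited w N H i \<tau> \<noteq> {1..N}"
  shows "visited w N H i (Suc \<tau>) =
    (if {w (rstate w N H i \<tau>), w (Suc (rstate w N H i \<tau>))} \<in> H (Suc \<tau>)
     then insert (rstate w N H i (Suc \<tau>)) (visited w N H i \<tau>) else visited w N H i \<tau>)"
proof -
  let ?q = "rstate w N H i \<tau>"
  have q: "?q \<in> {1..N}" using rstate_in_states[OF i] .
  have no_wrap: "?q mod N + 1 \<noteq> i"
  proof
    assume "?q mod N + 1 = i"
    then have "visited w N H i \<tau> = {1..N}"
      unfolding visited_def by (rule circ_wrap_around[OF q])
    then show False using incomplete by contradiction
  qed
  show ?thesis
  proof (cases "{w ?q, w (Suc ?q)} \<in> H (Suc \<tau>)")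
    case True
    then have "rstate w N H i (Suc \<tau>) = ?q mod N + 1" by (simp add: Let_def)
    then show ?thesis using True circ_extend[OF i q no_wrap] by (simp add: visited_def)
  next
    case False
    then show ?thesis by (simp add: visited_def Let_def)
  qed
qed

text \<open>In fewer than N steps an agent cannot complete a round of the tour, so its visited states
  grow by exactly its new state whenever it moves.\<close>

lemma card_visited_le:
  assumes i: "i \<in> {1..N}"
  shows "\<tau> < N \<Longrightarrow> card (visited w N H i \<tau>) \<le> Suc \<tau>"
proof (induction \<tau>)
  case 0
  then show ?case by (simp add: visited_def circ_same)
next
  case (Suc \<tau>)
  then have "card (visited w N H i \<tau>) < card {1..N}" by simp
  then have "visited w N H i \<tau> \<noteq> {1..N}" by auto
  note step = visited_Suc_if_incomplete[OF i this]
  have "finite (visited w N H i \<tau>)"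
    using finite_subset[OF visited_subset_states[OF i]] by blast
  then show ?case
    using Suc step by (simp add: card_insert_if)
qed

lemma visited_Suc:
  assumes "i \<in> {1..N}" "Suc \<tau> < N"
  shows "visited w N H i (Suc \<tau>) =
    (if {w (rstate w N H i \<tau>), w (Suc (rstate w N H i \<tau>))} \<in> H (Suc \<tau>)
     then insert (rstate w N H i (Suc \<tau>)) (visited w N H i \<tau>) else visited w N H i \<tau>)"
proof -
  have "card (visited w N H i \<tau>) < card {1..N}"
    using card_visited_le[OF assms(1), where \<tau>=\<tau> and w=w and H=H] assms(2) by simp
  then have "visited w N H i \<tau> \<noteq> {1..N}" by auto
  then show ?thesis by (rule visited_Suc_if_incomplete[OF assms(1)])
qed

lemma covering_walk_of_agent:
  assumes i: "i \<in> {1..N}" and closed: "w (Suc N) = w 1"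
    and schedule: "\<And>\<tau>. \<tau> < t \<Longrightarrow> H (Suc \<tau>) = E (g \<tau>)"
    and g_mono: "strict_mono_on {..<t} g" and "t < N"
  shows "\<tau> \<le> t \<Longrightarrow>
    covering_walk E (g ` {..<\<tau>}) (w i) (w (rstate w N H i \<tau>)) (w ` visited w N H i \<tau>)"
proof (induction \<tau>)
  case 0
  show ?case
    using covering_walk_refl by (simp add: visited_def circ_same)
next
  case (Suc \<tau>)
  let ?q = "rstate w N H i \<tau>"
  have walk: "covering_walk E (g ` {..<\<tau>}) (w i) (w ?q) (w ` visited w N H i \<tau>)"
    using Suc by simp
  have "Suc \<tau> < N" using Suc.prems \<open>t < N\<close> by simp
  note visited = visited_Suc[OF i this, where w=w and H=H]
  have snapshot: "H (Suc \<tau>) = E (g \<tau>)" using schedule Suc.prems by simp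
  show ?case
  proof (cases "{w ?q, w (Suc ?q)} \<in> E (g \<tau>)")
    case False
    have "g ` {..<\<tau>} \<subseteq> g ` {..<Suc \<tau>}" by auto
    from covering_walk_mono[OF walk this order_refl] show ?thesis
      using False visited snapshot by (simp add: Let_def)
  next
    case True
    have moved: "w (rstate w N H i (Suc \<tau>)) = w (Suc ?q)"
      using True snapshot closed_tour_mod_Suc[OF closed rstate_in_states[OF i]]
      by (simp add: Let_def)
    have "\<forall>a\<in>g ` {..<\<tau>}. \<forall>c\<in>{g \<tau>}. a < c"
      using g_mono Suc.prems by (auto simp: strict_mono_on_def)
    from covering_walk_trans[OF walk covering_walk_edge[where E=E and t="g \<tau>", OF True] this]
    have "covering_walk E (g ` {..<Suc \<tau>}) (w i) (w (Suc ?q)) (w ` visited w N H i (Suc \<tau>))"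
      by (rule covering_walk_mono)
        (use True visited snapshot moved in \<open>auto simp: lessThan_Suc Let_def\<close>)
    then show ?thesis using moved by simp
  qed
qed

lemma reduces_subset:
  assumes "reduces D X Y"
  shows "Y \<subseteq> X"
proof -
  have "(remove_step D)\<^sup>*\<^sup>* X Y" using assms by (simp add: reduces_def)
  then show ?thesis
  proof induction
    case (step Y Z)
    then obtain i where "Z = Y - {i}"
      by (auto simp: remove_step_def)
    then show ?case using step.IH by blast
  qed simp
qed

lemma reduces_UN_eq:
  assumes "reduces D X Y"
  shows "(\<Union>j\<in>Y. D j) = (\<Union>j\<in>X. D j)"
proof -
  have "(remove_step D)\<^sup>*\<^sup>* X Y" using assms by (simp add: reduces_def)
  then show ?thesis
  proof induction
    case (step Y Z)
    then obtain i where "removable D Y i" "Z = Y - {i}"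
      by (auto simp: remove_step_def)
    then have "(\<Union>j\<in>Z. D j) = (\<Union>j\<in>Y. D j)"
      by (auto simp: removable_def)
    then show ?case using step.IH by simp
  qed simp
qed

lemma active_run_covers_states:
  assumes run: "active_run w N H t A" and "t < N"
  shows "\<tau> \<le> t \<Longrightarrow> A \<tau> \<subseteq> {1..N} \<and> (\<Union>j\<in>A \<tau>. visited w N H j \<tau>) = {1..N}"
proof (induction \<tau>)
  case 0
  then show ?case
    using run by (simp add: active_run_def visited_def circ_same)
next
  case (Suc \<tau>)
  have IH: "A \<tau> \<subseteq> {1..N}" "(\<Union>j\<in>A \<tau>. visited w N H j \<tau>) = {1..N}"
    using Suc by auto
  have reduce: "reduces (\<lambda>j. visited w N H j (Suc \<tau>)) (A \<tau>) (A (Suc \<tau>))"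
    using run Suc.prems by (simp add: active_run_def)
  have "Suc \<tau> < N" using Suc.prems \<open>t < N\<close> by simp
  have grow: "visited w N H j \<tau> \<subseteq> visited w N H j (Suc \<tau>)"
    and bounded: "visited w N H j (Suc \<tau>) \<subseteq> {1..N}" if "j \<in> A \<tau>" for j
  proof -
    have j: "j \<in> {1..N}" using IH(1) that by (rule subsetD)
    show "visited w N H j \<tau> \<subseteq> visited w N H j (Suc \<tau>)"
      using visited_Suc[OF j \<open>Suc \<tau> < N\<close>, where w=w and H=H] by (auto split: if_splits)
    show "visited w N H j (Suc \<tau>) \<subseteq> {1..N}"
      by (rule visited_subset_states[OF j])
  qed
  have "{1..N} \<subseteq> (\<Union>j\<in>A \<tau>. visited w N H j (Suc \<tau>))"
    unfolding IH(2)[symmetric] using grow by (rule UN_mono[OF order_refl])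
  moreover have "(\<Union>j\<in>A \<tau>. visited w N H j (Suc \<tau>)) \<subseteq> {1..N}"
    using bounded by (rule UN_least)
  ultimately show ?case
    using reduces_subset[OF reduce] reduces_UN_eq[OF reduce] IH(1) by auto
qed

lemma sorted_wrt_less_segment:
  fixes xs :: "'a::linorder list"
  shows "sorted_wrt (<) xs \<Longrightarrow> xs \<noteq> [] \<Longrightarrow> hd xs \<le> q \<Longrightarrow> q < last xs \<Longrightarrow>
    \<exists>j. Suc j < length xs \<and> xs ! j \<le> q \<and> q < xs ! Suc j"
proof (induction xs)
  case (Cons x xs)
  show ?case
  proof (cases "xs \<noteq> [] \<and> hd xs \<le> q")
    case True
    then obtain j where "Suc j < length xs" "xs ! j \<le> q" "q < xs ! Suc j"
      using Cons by auto
    then show ?thesis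
      by (intro exI[of _ "Suc j"]) auto
  next
    case False
    then show ?thesis
      using Cons.prems by (intro exI[of _ 0]) (cases xs; auto)
  qed
qed simp

lemma states_subset_state_intervals:
  assumes "finite M" "2 \<le> card M"
  shows "{1..N} \<subseteq> \<Union>(state_intervals N M)"
proof
  fix q assume q: "q \<in> {1..N}"
  define ms where "ms = sorted_list_of_set M"
  have sorted: "sorted_wrt (<) ms" and length: "length ms = card M"
    using assms(1) by (simp_all add: ms_def)
  then have "ms \<noteq> []" using assms(2) by auto
  have "ms ! 0 < ms ! (length ms - 1)"
    using sorted_wrt_nth_less[OF sorted] length assms(2) by simp
  then have hd_less_last: "hd ms < last ms"
    using \<open>ms \<noteq> []\<close> by (simp add: hd_conv_nth last_conv_nth)
  have intervals: "state_intervals N M =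
      {circ_open N (ms ! j) (ms ! Suc j) | j. Suc j < length ms} \<union> {circ_open N (last ms) (hd ms)}"
    using \<open>ms \<noteq> []\<close> by (simp add: state_intervals_def ms_def Let_def)
  show "q \<in> \<Union>(state_intervals N M)"
  proof (cases "q < hd ms \<or> last ms \<le> q")
    case True
    then have "q \<in> circ_open N (last ms) (hd ms)"
      using q hd_less_last by (auto simp: circ_open_def circ_def)
    then show ?thesis using intervals by auto
  next
    case False
    then obtain j where j: "Suc j < length ms" "ms ! j \<le> q" "q < ms ! Suc j"
      using sorted_wrt_less_segment[OF sorted \<open>ms \<noteq> []\<close>, of q] by auto
    then have "q \<in> circ_open N (ms ! j) (ms ! Suc j)"
      by (auto simp: circ_open_def circ_def)
    then show ?thesis using intervals j(1) by auto
  qed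
qed

lemma covering_tuple_visits_all_states:
  fixes R :: nat
  assumes "t < N" "1 \<le> R"
    and runs: "\<forall>i\<in>{1..R}. active_run w N (H i) t (A i)"
    and tuple: "\<forall>i\<in>{1..R}. s i \<in> A i t"
    and covering: "\<forall>I\<in>state_intervals N (\<Union>i\<in>{1..R}. A i t).
      \<exists>i\<in>{1..R}. I \<subseteq> visited w N (H i) (s i) t"
  shows "{1..N} \<subseteq> (\<Union>i\<in>{1..R}. visited w N (H i) (s i) t)"
proof -
  define M where "M = (\<Union>i\<in>{1..R}. A i t)"
  have active: "A i t \<subseteq> {1..N} \<and> (\<Union>j\<in>A i t. visited w N (H i) j t) = {1..N}"
    if "i \<in> {1..R}" for i
    using active_run_covers_states[of w N "H i" t "A i" t] runs that \<open>t < N\<close> by auto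
  then have "finite M"
    unfolding M_def by (meson UN_least finite_atLeastAtMost finite_subset)
  have "1 \<in> {1..R}" using \<open>1 \<le> R\<close> by simp
  then have "s 1 \<in> M" "A 1 t \<subseteq> M"
    using tuple unfolding M_def by blast+
  show ?thesis
  proof (cases "2 \<le> card M")
    case True
    then show ?thesis
      using states_subset_state_intervals[OF \<open>finite M\<close>] covering unfolding M_def by blast
  next
    case False
    then have "card M = 1"
      using \<open>finite M\<close> \<open>s 1 \<in> M\<close> by (cases "card M") auto
    then have "A 1 t = {s 1}"
      using \<open>s 1 \<in> M\<close> \<open>A 1 t \<subseteq> M\<close> tuple \<open>1 \<le> R\<close> by (auto simp: card_1_singleton_iff)
    then show ?thesis
      using active[of 1] \<open>1 \<le> R\<close> by auto
  qed
qed

lemma dfs_tour_in_vertices: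
  assumes "dfs_tour T r N w" "\<forall>e\<in>T. e \<subseteq> V"
  shows "w ` {1..N} \<subseteq> V"
proof
  fix v assume "v \<in> w ` {1..N}"
  then obtain q where "q \<in> {1..N}" "v = w q" by blast
  then have "{v, w (Suc q)} \<in> T" using assms(1) by (simp add: dfs_tour_def)
  then show "v \<in> V" using assms(2) by blast
qed

lemma dfs_tour_vertices_covered:
  assumes tour: "dfs_tour T r N w" and "0 < N" and connected: "(\<lambda>a b. {a, b} \<in> T)\<^sup>*\<^sup>* r x"
  shows "x \<in> w ` {1..N}"
  using connected
proof (cases rule: rtranclp.cases)
  case rtrancl_refl
  have "w 1 = r" using tour by (simp add: dfs_tour_def)
  then show ?thesis
    using rtrancl_refl \<open>0 < N\<close> by (intro image_eqI[of _ _ 1]) simp_all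
next
  case (rtrancl_into_rtrancl y)
  then have "card {q\<in>{1..N}. {w q, w (Suc q)} = {y, x}} = 2"
    using tour by (simp add: dfs_tour_def)
  then have "{q\<in>{1..N}. {w q, w (Suc q)} = {y, x}} \<noteq> {}"
    by (metis card.empty zero_neq_numeral)
  then obtain q where q: "q \<in> {1..N}" "{w q, w (Suc q)} = {y, x}"
    by blast
  have "w (Suc q) = w (q mod N + 1)"
    using closed_tour_mod_Suc[OF _ q(1), of w] tour by (simp add: dfs_tour_def)
  moreover have "q mod N + 1 \<in> {1..N}"
    using \<open>0 < N\<close> by (simp add: Suc_leI)
  moreover have "x = w q \<or> x = w (Suc q)"
    using q(2) by (auto simp: doubleton_eq_iff)
  ultimately show ?thesis
    using q(1) by auto
qed

lemma rho_pos: "1 \<le> k \<Longrightarrow> 1 \<le> rho k"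
proof -
  assume "1 \<le> k"
  then have "0 < 18 * real k * ln (6 * real k)" by simp
  then show ?thesis unfolding rho_def by linarith
qed

lemma tsteps_less: "0 < N \<Longrightarrow> 1 \<le> k \<Longrightarrow> tsteps N k < N"
  unfolding tsteps_def by simp

lemma epoch_bounds:
  fixes b :: "nat \<Rightarrow> nat"
  assumes "b 0 = 1" "\<forall>i < R. b i < b (Suc i)" "b R \<le> L + 1" "i \<in> {1..R}"
  shows "1 \<le> b (i - 1)" "b (i - 1) \<le> b i" "b i \<le> L + 1"
proof -
  have mono: "b j \<le> b j'" if "j \<le> j'" "j' \<le> R" for j j'
    by (rule lift_Suc_mono_le_ivl[of "{..<R}"]) (use assms(2) that in auto)
  have "b 0 \<le> b (i - 1)" "b (i - 1) \<le> b i" "b i \<le> b R"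
    using assms(4) by (auto intro: mono)
  then show "1 \<le> b (i - 1)" "b (i - 1) \<le> b i" "b i \<le> L + 1"
    using assms(1,3) by simp_all
qed

lemma epoch_covering_walk:
  assumes dtc: "delta_temporally_connected V E L \<Delta>"
    and bounds: "1 \<le> b (i - 1)" "b (i - 1) \<le> b i" "b i \<le> L + 1"
    and epoch_size: "\<Delta> \<le> card {x \<in> epoch b i. edge_deficient T k (E x)}"
    and roundabout_size: "t \<le> card {x \<in> roundabout_part b \<Delta> i. edge_deficient T k (E x)}"
    and tour: "w ` {1..N} \<subseteq> V" "w (Suc N) = w 1" and "t < N" and s: "s \<in> {1..N}"
    and "x \<in> V"
  shows "\<exists>y\<in>V. covering_walk E (epoch b i) x y (w ` visited w N (epoch_graphs E T k b \<Delta> i) s t)"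
proof -
  let ?H = "epoch_graphs E T k b \<Delta> i"
  define S where "S = {x \<in> roundabout_part b \<Delta> i. edge_deficient T k (E x)}"
  define g where "g j = sorted_list_of_set S ! j" for j
  have "card {x \<in> epoch b i. edge_deficient T k (E x)} \<le> card (epoch b i)"
    by (rule card_mono) (auto simp: epoch_def)
  then have gap: "b (i - 1) + \<Delta> \<le> b i"
    using epoch_size bounds(2) by (simp add: epoch_def)
  then have "temporally_connected_on V E {b (i - 1)..<b (i - 1) + \<Delta>}"
    using dtc bounds by (simp add: delta_temporally_connected_def)
  moreover have "w s \<in> V" using tour(1) s by blast
  ultimately have reposition: "covering_walk E {b (i - 1)..<b (i - 1) + \<Delta>} x (w s) {}"
    using \<open>x \<in> V\<close> by (simp add: temporally_connected_on_iff_covering_walk)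
  have "finite S" by (simp add: S_def roundabout_part_def)
  then have sorted: "sorted_wrt (<) (sorted_list_of_set S)"
    and length: "length (sorted_list_of_set S) = card S" by simp_all
  have "t \<le> card S" using roundabout_size by (simp add: S_def)
  then have "strict_mono_on {..<t} g"
    unfolding strict_mono_on_def g_def using sorted_wrt_nth_less[OF sorted] length by auto
  moreover have "?H (Suc \<tau>) = E (g \<tau>)" for \<tau>
    by (simp add: epoch_graphs_def g_def S_def)
  ultimately have agent: "covering_walk E (g ` {..<t}) (w s) (w (rstate w N ?H s t)) (w ` visited w N ?H s t)"
    using covering_walk_of_agent[OF s tour(2) _ _ \<open>t < N\<close>] by blast
  have "g j \<in> S" if "j < t" for j
    using nth_mem[of j "sorted_list_of_set S"] length \<open>t \<le> card S\<close> \<open>finite S\<close> that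
    unfolding g_def by simp
  then have g_range: "g ` {..<t} \<subseteq> {b (i - 1) + \<Delta>..<b i}"
    by (auto simp: S_def roundabout_part_def)
  have "covering_walk E ({b (i - 1)..<b (i - 1) + \<Delta>} \<union> g ` {..<t}) x (w (rstate w N ?H s t))
      ({} \<union> w ` visited w N ?H s t)"
    by (rule covering_walk_trans[OF reposition agent]) (use g_range in fastforce)
  then have "covering_walk E (epoch b i) x (w (rstate w N ?H s t)) (w ` visited w N ?H s t)"
    by (rule covering_walk_mono) (use g_range gap in \<open>auto simp: epoch_def\<close>)
  then show ?thesis
    using tour(1) rstate_in_states[OF s] by blast
qed

theorem lemma13:
  fixes V :: "'a set" and E :: "nat \<Rightarrow> 'a set set" and L n k \<Delta> N :: nat
    and T :: "'a set set" and r :: 'a and w :: "nat \<Rightarrow> 'a"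
    and b :: "nat \<Rightarrow> nat" and A :: "nat \<Rightarrow> nat \<Rightarrow> nat set" and s :: "nat \<Rightarrow> nat"
  assumes fin: "finite V" and cardV: "card V = n" and n2: "n \<ge> 2" and k1: "k \<ge> 1"
    and snapshots: "\<forall>t e. e \<in> E t \<longrightarrow> e \<subseteq> V \<and> card e = 2"
    and tree: "spanning_tree V E L T"
    and N_def: "N = 2 * (n - 1)"
    and root: "r \<in> V"
    and tour: "dfs_tour T r N w"
    and b0: "b 0 = 1"
    and b_mono: "\<forall>i < rho k. b i < b (Suc i)"
    and b_end: "b (rho k) \<le> L + 1"
    and epochs: "\<forall>i\<in>{1..rho k}.
        card {x \<in> epoch b i. edge_deficient T k (E x)} \<ge> \<Delta> + tsteps N k \<and>
        card {x \<in> roundabout_part b \<Delta> i. edge_deficient T k (E x)} \<ge> tsteps N k"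
    and runs: "\<forall>i\<in>{1..rho k}. active_run w N (epoch_graphs E T k b \<Delta> i) (tsteps N k) (A i)"
    and dtc: "delta_temporally_connected V E L \<Delta>"
    and tuple: "\<forall>i\<in>{1..rho k}. s i \<in> A i (tsteps N k)"
    and covering: "\<forall>I \<in> state_intervals N (\<Union>i\<in>{1..rho k}. A i (tsteps N k)).
        \<exists>i\<in>{1..rho k}. I \<subseteq> visited w N (epoch_graphs E T k b \<Delta> i) (s i) (tsteps N k)"
  shows "\<forall>u\<in>V. \<exists>vs ts. temporal_walk E vs ts \<and> hd vs = u \<and>
           set ts \<subseteq> {b 0..<b (rho k)} \<and> V \<subseteq> set vs"
proof
  fix u assume "u \<in> V"
  let ?t = "tsteps N k" and ?R = "rho k" and ?H = "epoch_graphs E T k b \<Delta>"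
  have "0 < N" using N_def n2 by simp
  then have "?t < N" by (rule tsteps_less[OF _ k1])
  have "\<forall>e\<in>T. e \<subseteq> V"
    using tree snapshots unfolding spanning_tree_def underlying_edges_def by blast
  with tour have tour_in_V: "w ` {1..N} \<subseteq> V" by (rule dfs_tour_in_vertices)
  have V_on_tour: "V \<subseteq> w ` {1..N}"
    using dfs_tour_vertices_covered[OF tour \<open>0 < N\<close>] tree root by (auto simp: spanning_tree_def)
  have closed: "w (Suc N) = w 1" using tour by (simp add: dfs_tour_def)
  have epoch_walk: "\<exists>y\<in>V. covering_walk E (epoch b i) x y (w ` visited w N (?H i) (s i) ?t)"
    if i: "i \<in> {1..?R}" and "x \<in> V" for i x
  proof (rule epoch_covering_walk[OF dtc epoch_bounds[OF b0 b_mono b_end i] _ _ tour_in_V closed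
        \<open>?t < N\<close> _ \<open>x \<in> V\<close>])
    show "\<Delta> \<le> card {x \<in> epoch b i. edge_deficient T k (E x)}"
      using epochs i by fastforce
    show "?t \<le> card {x \<in> roundabout_part b \<Delta> i. edge_deficient T k (E x)}"
      using epochs i by blast
    have "A i ?t \<subseteq> {1..N}"
      using active_run_covers_states[of w N "?H i" ?t "A i" ?t] runs i \<open>?t < N\<close> by simp
    then show "s i \<in> {1..N}" using tuple i by blast
  qed
  have "b i \<le> b (Suc i)" if "i < ?R" for i
    using b_mono that by (simp add: less_imp_le)
  from covering_walk_through_epochs[OF this epoch_walk \<open>u \<in> V\<close>] obtain y
    where "covering_walk E {b 0..<b ?R} u y (\<Union>i\<in>{1..?R}. w ` visited w N (?H i) (s i) ?t)"
    by blast
  moreover have "w ` {1..N} \<subseteq> w ` (\<Union>i\<in>{1..?R}. visited w N (?H i) (s i) ?t)"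
    using covering_tuple_visits_all_states[OF \<open>?t < N\<close> rho_pos[OF k1] runs tuple covering]
    by (rule image_mono)
  then have "V \<subseteq> (\<Union>i\<in>{1..?R}. w ` visited w N (?H i) (s i) ?t)"
    using V_on_tour by (simp add: image_UN)
  ultimately have "covering_walk E {b 0..<b ?R} u y V"
    by (rule covering_walk_mono[OF _ order_refl])
  then show "\<exists>vs ts. temporal_walk E vs ts \<and> hd vs = u \<and> set ts \<subseteq> {b 0..<b ?R} \<and> V \<subseteq> set vs"
    unfolding covering_walk_def by (elim exE conjE) (intro exI conjI)
qed

end
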